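(* Let $\Omega_n=\dfrac{\pi^{n/2}}{\Gamma\left(\frac n2+1\right)}$ and \[ \Psi(n)=-\frac{n+1}{2n}\ln\frac n2+\frac{n+2}{2n+2}\ln\frac{n+1}{2}-\frac{\ln 2\pi}{2n(n+1)}. \] Then for every $n\in\mathbb{N}$, \[ \Psi(n)-\frac{1}{3n^3}<\frac1n\ln\Omega_n-\frac1{n+1}\ln\Omega_{n+1}<\Psi(n)-\frac1{3n^3}+\frac1{2n^4}. \]
   Context: $\Omega_n$ is the volume of the unit ball in $\mathbb{R}^n$; $\Gamma$ is Euler's gamma function. *)

theory Defs
  imports "HOL-Analysis.Analysis"
begin

definition Omega :: "nat \<Rightarrow> real" where
  "Omega n = pi powr (real n / 2) / Gamma (real n / 2 + 1)"

definition Psi :: "nat \<Rightarrow> real" where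
  "Psi n = - (real n + 1) / (2 * real n) * ln (real n / 2)
           + (real n + 2) / (2 * real n + 2) * ln ((real n + 1) / 2)
           - ln (2 * pi) / (2 * real n * (real n + 1))"

end

theory Submission
  imports Defs "HOL-Real_Asymp.Real_Asymp"
begin

text \<open>
  With Binet's function \<open>\<mu>(y) = ln \<Gamma>(y+1) - (y+1/2) ln y + y - ln(2\<pi>)/2\<close> one has
  \<open>ln \<Omega>\<^sub>n = (n/2) ln \<pi> - (n/2+1/2) ln(n/2) + n/2 - ln(2\<pi>)/2 - \<mu>(n/2)\<close>, so the difference in the
  theorem equals \<open>\<Psi>(n) + \<mu>((n+1)/2)/(n+1) - \<mu>(n/2)/n\<close>, and everything reduces to the estimate
  \<open>1/(12y) - 1/(360y\<^sup>3) \<le> \<mu>(y) \<le> 1/(12y) - 1/(360y\<^sup>3) + 1/(1260y\<^sup>5)\<close> for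
  \<open>y \<in> {1/2, 1, 3/2, \<dots>}\<close>. Since \<open>\<mu>(y) - \<mu>(y+1) = (y+1/2) ln((y+1)/y) - 1\<close>, truncations of the odd series of
  \<open>ln((1+t)/(1-t))\<close> at \<open>t = 1/(2y+1)\<close> squeeze these differences between the corresponding
  differences of the two bounds, and telescoping gives the estimate once \<open>\<mu>(y+k) \<rightarrow> 0\<close>.
  That limit (Stirling's constant) follows from Legendre's duplication formula together with
  \<open>x \<Gamma>(x+1/2)\<^sup>2 \<le> \<Gamma>(x+1)\<^sup>2 \<le> (x+1/2) \<Gamma>(x+1/2)\<^sup>2\<close>, a consequence of the monotonicity of \<open>Beta\<close>.
\<close>

lemma ln_ratio_ge_taylor:
  fixes t :: real
  assumes "0 \<le> t" "t < 1"
  shows "2 * (t + t^3/3 + t^5/5 + t^7/7) \<le> ln (1 + t) - ln (1 - t)"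
proof -
  let ?f = "\<lambda>x::real. ln (1 + x) - ln (1 - x) - 2 * (x + x^3/3 + x^5/5 + x^7/7)"
  have "?f 0 \<le> ?f t"
  proof (rule DERIV_nonneg_imp_nondecreasing[OF assms(1)])
    fix x :: real
    assume x: "0 \<le> x" "x \<le> t"
    then have "x < 1" using assms by simp
    then have "x\<^sup>2 < 1" using x by (simp add: abs_square_less_1)
    have "DERIV ?f x :> 1/(1 + x) + 1/(1 - x) - 2 * (1 + x^2 + x^4 + x^6)"
      by (rule derivative_eq_intros refl | use x \<open>x < 1\<close> in simp)+
    moreover have "1/(1 + x) + 1/(1 - x) - 2 * (1 + x^2 + x^4 + x^6) = 2 * x^8 / (1 - x\<^sup>2)"
      using x \<open>x < 1\<close> \<open>x\<^sup>2 < 1\<close> by (simp add: divide_simps) algebra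
    moreover have "2 * x^8 / (1 - x\<^sup>2) \<ge> 0"
      using \<open>x\<^sup>2 < 1\<close> by simp
    ultimately show "\<exists>y. DERIV ?f x :> y \<and> y \<ge> 0" by auto
  qed
  then show ?thesis by simp
qed

lemma ln_ratio_le_taylor:
  fixes t :: real
  assumes "0 \<le> t" "t \<le> 1/2"
  shows "ln (1 + t) - ln (1 - t) \<le> 2 * (t + t^3/3 + t^5/5 + t^7/7 + 4 * t^9/27)"
proof -
  let ?f = "\<lambda>x::real. 2 * (x + x^3/3 + x^5/5 + x^7/7 + 4 * x^9/27) - (ln (1 + x) - ln (1 - x))"
  have "?f 0 \<le> ?f t"
  proof (rule DERIV_nonneg_imp_nondecreasing[OF assms(1)])
    fix x :: real
    assume x: "0 \<le> x" "x \<le> t"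
    then have "x \<le> 1/2" using assms by simp
    then have "x\<^sup>2 \<le> 1/4"
      using x power_mono[of x "1/2" 2] by (simp add: power2_eq_square)
    have "DERIV ?f x :> 2 * (1 + x^2 + x^4 + x^6 + 4/3 * x^8) - (1/(1 + x) + 1/(1 - x))"
      by (rule derivative_eq_intros refl | use x \<open>x \<le> 1/2\<close> in simp)+
    moreover have "2 * (1 + x^2 + x^4 + x^6 + 4/3 * x^8) - (1/(1 + x) + 1/(1 - x))
        = 2 * x^8 * (1/3 - 4/3 * x\<^sup>2) / (1 - x\<^sup>2)"
      using x \<open>x \<le> 1/2\<close> \<open>x\<^sup>2 \<le> 1/4\<close> by (simp add: divide_simps) algebra
    moreover have "2 * x^8 * (1/3 - 4/3 * x\<^sup>2) / (1 - x\<^sup>2) \<ge> 0"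
      using \<open>x\<^sup>2 \<le> 1/4\<close> by (intro divide_nonneg_pos mult_nonneg_nonneg) auto
    ultimately show "\<exists>y. DERIV ?f x :> y \<and> y \<ge> 0" by auto
  qed
  then show ?thesis by simp
qed

text \<open>Since \<open>\<Gamma>(y+1) = y \<Gamma>(y)\<close>, this is Binet's function \<open>ln \<Gamma>(y) - (y-1/2) ln y + y - ln \<surd>(2\<pi>)\<close>.\<close>

definition binet_mu :: "real \<Rightarrow> real" where
  "binet_mu y = ln (Gamma (y + 1)) - (y + 1/2) * ln y + y - ln (2 * pi) / 2"

definition binet_lower :: "real \<Rightarrow> real" where
  "binet_lower y = 1 / (12 * y) - 1 / (360 * y^3)"

definition binet_upper :: "real \<Rightarrow> real" where
  "binet_upper y = binet_lower y + 1 / (1260 * y^5)"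

lemma binet_lower_diff_le:
  fixes u :: real
  assumes "u \<ge> 2"
  shows "binet_lower ((u - 1)/2) - binet_lower ((u + 1)/2) \<le> 1/(3*u^2) + 1/(5*u^4) + 1/(7*u^6)"
proof -
  have "u - 1 \<noteq> 0" "u + 1 \<noteq> 0" "u \<noteq> 0" using assms by auto
  then have eq: "1/(3*u^2) + 1/(5*u^4) + 1/(7*u^6) - (binet_lower ((u - 1)/2) - binet_lower ((u + 1)/2))
      = (80*u^6 - 51*u^4 + 72*u^2 - 45) / (315 * u^6 * (u - 1)^3 * (u + 1)^3)"
    unfolding binet_lower_def by (simp add: divide_simps) algebra
  define v where "v = u - 2"
  have "80*u^6 - 51*u^4 + 72*u^2 - 45
      = 4547 + 14016 * v + 18048 * v^2 + 12392 * v^3 + 4749 * v^4 + 960 * v^5 + 80 * v^6"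
    unfolding v_def by algebra
  also have "\<dots> \<ge> 0" using assms by (simp add: v_def)
  finally show ?thesis using eq assms by (smt (verit) divide_nonneg_pos mult_pos_pos zero_less_power)
qed

lemma binet_upper_diff_ge:
  fixes u :: real
  assumes "u \<ge> 2"
  shows "1/(3*u^2) + 1/(5*u^4) + 1/(7*u^6) + 4/(27*u^8) \<le> binet_upper ((u - 1)/2) - binet_upper ((u + 1)/2)"
proof -
  have "u - 1 \<noteq> 0" "u + 1 \<noteq> 0" "u \<noteq> 0" using assms by auto
  then have eq: "binet_upper ((u - 1)/2) - binet_upper ((u + 1)/2) - (1/(3*u^2) + 1/(5*u^4) + 1/(7*u^6) + 4/(27*u^8))
      = (3892*u^10 - 56*u^8 - 2720*u^6 + 3656*u^4 - 2260*u^2 + 560) / (3780 * u^8 * (u - 1)^5 * (u + 1)^5)"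
    unfolding binet_upper_def binet_lower_def by (simp add: divide_simps) algebra
  define v where "v = u - 2"
  have "3892*u^10 - 56*u^8 - 2720*u^6 + 3656*u^4 - 2260*u^2 + 560
      = 3847008 + 19455408 * v + 44168172 * v^2 + 59274816 * v^3 + 52086216 * v^4 + 31327360 * v^5
        + 13068128 * v^6 + 3735424 * v^7 + 700504 * v^8 + 77840 * v^9 + 3892 * v^10"
    unfolding v_def by algebra
  also have "\<dots> \<ge> 0" using assms by (simp add: v_def)
  finally show ?thesis using eq assms by (smt (verit) divide_nonneg_pos mult_pos_pos zero_less_power)
qed

lemma binet_mu_diff:
  fixes y :: real
  assumes "y > 0"
  shows "binet_mu y - binet_mu (y + 1) = (y + 1/2) * ln ((y + 1) / y) - 1"
proof -
  have "Gamma (y + 1 + 1) = (y + 1) * Gamma (y + 1)"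
    using assms by (intro Gamma_plus1) (auto elim!: nonpos_Ints_cases)
  moreover have "Gamma (y + 1) > 0" using assms by (intro Gamma_real_pos) simp
  ultimately have "ln (Gamma (y + 1 + 1)) = ln (y + 1) + ln (Gamma (y + 1))"
    using assms by (simp add: ln_mult_pos)
  moreover have "ln ((y + 1) / y) = ln (y + 1) - ln y" using assms by (simp add: ln_div)
  ultimately show ?thesis unfolding binet_mu_def by (simp only:) (simp add: algebra_simps)
qed

lemma binet_mu_diff_bounds:
  fixes y :: real
  assumes "y \<ge> 1/2"
  shows "binet_lower y - binet_lower (y + 1) \<le> binet_mu y - binet_mu (y + 1)"
    and "binet_mu y - binet_mu (y + 1) \<le> binet_upper y - binet_upper (y + 1)"
proof -
  define u where "u = 2 * y + 1"
  define t where "t = 1 / u"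
  have u: "u \<ge> 2" and t: "0 \<le> t" "t \<le> 1/2" using assms by (auto simp: u_def t_def)
  have y_eq: "y = (u - 1)/2" "y + 1 = (u + 1)/2" by (simp_all add: u_def)
  have "(y + 1) / y = (1 + t) / (1 - t)" using u unfolding y_eq t_def by (simp add: field_simps)
  then have "ln ((y + 1) / y) = ln (1 + t) - ln (1 - t)" using t by (simp add: ln_div)
  then have mu_diff: "binet_mu y - binet_mu (y + 1) = u/2 * (ln (1 + t) - ln (1 - t)) - 1"
    using binet_mu_diff[of y] assms by (simp add: u_def)
  have "u/2 * (2 * (t + t^3/3 + t^5/5 + t^7/7)) - 1 = 1/(3*u^2) + 1/(5*u^4) + 1/(7*u^6)"
    using u by (simp add: t_def field_simps power_eq_if)
  moreover have "u/2 * (2 * (t + t^3/3 + t^5/5 + t^7/7)) \<le> u/2 * (ln (1 + t) - ln (1 - t))"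
    using ln_ratio_ge_taylor[of t] t u by (intro mult_left_mono) auto
  ultimately show "binet_lower y - binet_lower (y + 1) \<le> binet_mu y - binet_mu (y + 1)"
    using binet_lower_diff_le[OF u, folded y_eq] mu_diff by linarith
  have "u/2 * (2 * (t + t^3/3 + t^5/5 + t^7/7 + 4 * t^9/27)) - 1
      = 1/(3*u^2) + 1/(5*u^4) + 1/(7*u^6) + 4/(27*u^8)"
    using u by (simp add: t_def field_simps power_eq_if)
  moreover have "u/2 * (ln (1 + t) - ln (1 - t)) \<le> u/2 * (2 * (t + t^3/3 + t^5/5 + t^7/7 + 4 * t^9/27))"
    using ln_ratio_le_taylor[of t] t u by (intro mult_left_mono) auto
  ultimately show "binet_mu y - binet_mu (y + 1) \<le> binet_upper y - binet_upper (y + 1)"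
    using binet_upper_diff_ge[OF u, folded y_eq] mu_diff by linarith
qed

text \<open>By the previous lemma, \<open>\<mu> - binet_lower\<close> decreases and \<open>\<mu> - binet_upper\<close> increases
  along \<open>y + k\<close>, while both bounds tend to \<open>0\<close>.\<close>

lemma binet_mu_shift_limit:
  fixes y :: real
  assumes "y \<ge> 1/2"
  obtains L where "(\<lambda>k. binet_mu (y + real k)) \<longlonglongrightarrow> L"
    and "binet_mu y - binet_upper y \<le> L" and "L \<le> binet_mu y - binet_lower y"
proof -
  define X where "X = (\<lambda>k. binet_mu (y + real k) - binet_lower (y + real k))"
  define Y where "Y = (\<lambda>k. binet_mu (y + real k) - binet_upper (y + real k))"
  have "X (Suc k) \<le> X k" "Y k \<le> Y (Suc k)" for k
    using binet_mu_diff_bounds[of "y + real k"] assms by (simp_all add: X_def Y_def add_ac)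
  then have dec: "decseq X" and inc: "incseq Y" by (auto intro: decseq_SucI incseq_SucI)
  have "Y k \<le> X k" for k using assms by (simp add: X_def Y_def binet_upper_def)
  then have "\<forall>k. Y 0 \<le> X k" using inc by (meson incseq_def order_trans zero_le)
  then obtain L where L: "X \<longlonglongrightarrow> L" "\<forall>k. L \<le> X k" using decseq_convergent[OF dec] by blast
  have lower0: "(\<lambda>k. binet_lower (y + real k)) \<longlonglongrightarrow> 0"
    unfolding binet_lower_def using assms by real_asymp
  have upper0: "(\<lambda>k. binet_upper (y + real k)) \<longlonglongrightarrow> 0"
    unfolding binet_upper_def binet_lower_def using assms by real_asymp
  have mu: "(\<lambda>k. binet_mu (y + real k)) \<longlonglongrightarrow> L"
    using tendsto_add[OF L(1) lower0] by (simp add: X_def)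
  have "Y \<longlonglongrightarrow> L" using tendsto_diff[OF mu upper0] by (simp add: Y_def)
  then have "Y 0 \<le> L" using inc by (intro incseq_le) auto
  moreover have "L \<le> X 0" using L(2) by blast
  ultimately show thesis using that mu by (simp add: X_def Y_def)
qed

lemma Gamma_half_shift_sq_bounds:
  fixes x :: real
  assumes "x > 0"
  shows "x * Gamma (x + 1/2)^2 \<le> Gamma (x + 1)^2"
    and "Gamma (x + 1)^2 \<le> (x + 1/2) * Gamma (x + 1/2)^2"
proof -
  define g0 g1 g2 g3 where "g0 = Gamma x" and "g1 = Gamma (x + 1/2)"
    and "g2 = Gamma (x + 1)" and "g3 = Gamma (x + 3/2)"
  have pos: "g0 > 0" "g1 > 0" "g2 > 0" "g3 > 0" "sqrt pi > 0"
    using assms by (auto simp: g0_def g1_def g2_def g3_def)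
  have "x \<notin> \<int>\<^sub>\<le>\<^sub>0" "x + 1/2 \<notin> \<int>\<^sub>\<le>\<^sub>0" using assms by auto
  then have rec: "g2 = x * g0" "g3 = (x + 1/2) * g1"
    unfolding g0_def g1_def g2_def g3_def using Gamma_plus1[of "x + 1/2"]
    by (simp_all add: Gamma_plus1 add.assoc)
  have "Beta (x + 1/2) (1/2) \<le> Beta x (1/2)" "Beta (x + 1) (1/2) \<le> Beta (x + 1/2) (1/2)"
    using assms by (auto intro: Beta_real_mono)
  then have "g1 * sqrt pi / g2 \<le> g0 * sqrt pi / g1" "g2 * sqrt pi / g3 \<le> g1 * sqrt pi / g2"
    by (simp_all add: Beta_def Gamma_one_half_real g0_def g1_def g2_def g3_def add.assoc)
  then have "g1 * g1 \<le> g0 * g2" "g2 * g2 \<le> g1 * g3"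
    using pos by (simp_all add: field_simps)
  then show "x * g1^2 \<le> g2^2" and "g2^2 \<le> (x + 1/2) * g1^2"
    using mult_left_mono[of "g1 * g1" "g0 * g2" x] assms
    unfolding power2_eq_square rec(2) by (simp_all add: rec(1) algebra_simps)
qed

lemma Gamma_legendre_duplication_real:
  fixes x :: real
  assumes "x > 0"
  shows "Gamma x * Gamma (x + 1/2) = exp ((1 - 2 * x) * ln 2) * sqrt pi * Gamma (2 * x)"
proof -
  have "x \<notin> \<int>\<^sub>\<le>\<^sub>0" "x + 1/2 \<notin> \<int>\<^sub>\<le>\<^sub>0" using assms by auto
  then have "complex_of_real x \<notin> \<int>\<^sub>\<le>\<^sub>0" "complex_of_real x + 1/2 \<notin> \<int>\<^sub>\<le>\<^sub>0"
    using of_real_in_nonpos_Ints_iff[of x, where 'a = complex]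
      of_real_in_nonpos_Ints_iff[of "x + 1/2", where 'a = complex] by auto
  from Gamma_legendre_duplication[OF this]
  have "complex_of_real (Gamma x * Gamma (x + 1/2))
      = complex_of_real (exp ((1 - 2 * x) * ln 2) * sqrt pi * Gamma (2 * x))"
    by (simp flip: Gamma_complex_of_real exp_of_real)
  then show ?thesis by (rule of_real_eq_iff[THEN iffD1])
qed

lemma binet_mu_half_shift_bounds:
  fixes x :: real
  assumes "x > 1/2"
  shows "binet_mu (x - 1/2) - binet_mu x \<le> - ln x / 2 - x * ln (x - 1/2) + (x + 1/2) * ln x - 1/2"
    and "- ln (x + 1/2) / 2 - x * ln (x - 1/2) + (x + 1/2) * ln x - 1/2 \<le> binet_mu (x - 1/2) - binet_mu x"
proof -
  have x: "x > 0" using assms by simp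
  have pos: "Gamma (x + 1/2) > 0" "Gamma (x + 1) > 0" using x by auto
  have diff: "binet_mu (x - 1/2) - binet_mu x
      = ln (Gamma (x + 1/2)) - ln (Gamma (x + 1)) - x * ln (x - 1/2) + (x + 1/2) * ln x - 1/2"
    by (simp add: binet_mu_def algebra_simps)
  have "ln (x * Gamma (x + 1/2)^2) \<le> ln (Gamma (x + 1)^2)"
    by (rule ln_mono[OF Gamma_half_shift_sq_bounds(1)[OF x]]) (intro mult_pos_pos zero_less_power x pos)
  then have "ln x + 2 * ln (Gamma (x + 1/2)) \<le> 2 * ln (Gamma (x + 1))"
    using x pos by (simp add: ln_mult_pos ln_realpow)
  then show "binet_mu (x - 1/2) - binet_mu x \<le> - ln x / 2 - x * ln (x - 1/2) + (x + 1/2) * ln x - 1/2"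
    unfolding diff by linarith
  have "ln (Gamma (x + 1)^2) \<le> ln ((x + 1/2) * Gamma (x + 1/2)^2)"
    by (rule ln_mono[OF Gamma_half_shift_sq_bounds(2)[OF x]]) (use pos in simp)
  then have "2 * ln (Gamma (x + 1)) \<le> ln (x + 1/2) + 2 * ln (Gamma (x + 1/2))"
    using x pos by (simp add: ln_mult_pos ln_realpow)
  then show "- ln (x + 1/2) / 2 - x * ln (x - 1/2) + (x + 1/2) * ln x - 1/2 \<le> binet_mu (x - 1/2) - binet_mu x"
    unfolding diff by linarith
qed

lemma binet_mu_duplication:
  fixes x :: real
  assumes "x > 1/2"
  shows "binet_mu x + binet_mu (x - 1/2) - binet_mu (2 * x) = x * (ln x - ln (x - 1/2)) - 1/2"
proof -
  have x: "x > 0" using assms by simp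
  have pos: "Gamma x > 0" "Gamma (x + 1/2) > 0" "Gamma (2 * x) > 0" using x by auto
  have "ln (Gamma x * Gamma (x + 1/2)) = ln (exp ((1 - 2 * x) * ln 2) * sqrt pi * Gamma (2 * x))"
    using Gamma_legendre_duplication_real[OF x] by simp
  then have dup: "ln (Gamma x) + ln (Gamma (x + 1/2)) = (1 - 2 * x) * ln 2 + ln pi / 2 + ln (Gamma (2 * x))"
    using pos by (simp add: ln_mult_pos ln_sqrt)
  have "Gamma (x + 1) = x * Gamma x" "Gamma (2 * x + 1) = 2 * x * Gamma (2 * x)"
    using x by (auto intro!: Gamma_plus1 elim!: nonpos_Ints_cases)
  then have "ln (Gamma (x + 1)) = ln x + ln (Gamma x)"
    and "ln (Gamma (2 * x + 1)) = ln 2 + ln x + ln (Gamma (2 * x))"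
    using x pos by (simp_all add: ln_mult_pos)
  moreover have "ln (2 * x) = ln 2 + ln x" "ln (2 * pi) = ln 2 + ln pi"
    using x by (simp_all add: ln_mult_pos)
  ultimately show ?thesis using dup by (simp add: binet_mu_def algebra_simps) argo
qed

lemma binet_mu_tendsto_zero:
  shows "(\<lambda>k. binet_mu (real k + 1)) \<longlonglongrightarrow> 0"
    and "(\<lambda>k. binet_mu (real k + 1/2)) \<longlonglongrightarrow> 0"
proof -
  obtain L1 where L1: "(\<lambda>k. binet_mu (real k + 1)) \<longlonglongrightarrow> L1"
    using binet_mu_shift_limit[of 1] by (auto simp: add.commute)
  obtain L2 where L2: "(\<lambda>k. binet_mu (real k + 1/2)) \<longlonglongrightarrow> L2"
    using binet_mu_shift_limit[of "1/2"] by (auto simp: add.commute)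
  define lo up :: "nat \<Rightarrow> real"
    where "lo k = - ln (real k + 3/2) / 2 - (real k + 1) * ln (real k + 1/2) + (real k + 3/2) * ln (real k + 1) - 1/2"
      and "up k = - ln (real k + 1) / 2 - (real k + 1) * ln (real k + 1/2) + (real k + 3/2) * ln (real k + 1) - 1/2"
    for k
  have lo_le: "lo k \<le> binet_mu (real k + 1/2) - binet_mu (real k + 1)"
    and le_up: "binet_mu (real k + 1/2) - binet_mu (real k + 1) \<le> up k" for k
  proof -
    have "real k + 1 - 1/2 = real k + 1/2" "real k + 1 + 1/2 = real k + 3/2" by simp_all
    note bounds = binet_mu_half_shift_bounds[of "real k + 1", unfolded this]
    show "lo k \<le> binet_mu (real k + 1/2) - binet_mu (real k + 1)"
      using bounds(2) by (simp add: lo_def algebra_simps)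
    show "binet_mu (real k + 1/2) - binet_mu (real k + 1) \<le> up k"
      using bounds(1) by (simp add: up_def algebra_simps)
  qed
  have "lo \<longlonglongrightarrow> 0" "up \<longlonglongrightarrow> 0"
    unfolding lo_def[abs_def] up_def[abs_def] by real_asymp+
  then have "(\<lambda>k. binet_mu (real k + 1/2) - binet_mu (real k + 1)) \<longlonglongrightarrow> 0"
    by (rule tendsto_sandwich[rotated 2]) (use lo_le le_up in \<open>auto intro: always_eventually\<close>)
  moreover have "(\<lambda>k. binet_mu (real k + 1/2) - binet_mu (real k + 1)) \<longlonglongrightarrow> L2 - L1"
    using L1 L2 by (intro tendsto_diff)
  ultimately have "L2 = L1" using LIMSEQ_unique by fastforce
  have "(\<lambda>k. binet_mu (real (2 * k + 1) + 1)) \<longlonglongrightarrow> L1"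
    using LIMSEQ_subseq_LIMSEQ[OF L1, of "\<lambda>k. 2 * k + 1"] by (simp add: strict_mono_def o_def)
  then have "(\<lambda>k. binet_mu (real k + 1) + binet_mu (real k + 1/2) - binet_mu (real (2 * k + 1) + 1))
      \<longlonglongrightarrow> L1 + L2 - L1"
    using L1 L2 by (intro tendsto_intros)
  moreover have "binet_mu (real k + 1) + binet_mu (real k + 1/2) - binet_mu (real (2 * k + 1) + 1)
      = (real k + 1) * (ln (real k + 1) - ln (real k + 1/2)) - 1/2" for k
  proof -
    have "real k + 1 - 1/2 = real k + 1/2" "2 * (real k + 1) = real (2 * k + 1) + 1" by simp_all
    from binet_mu_duplication[of "real k + 1", unfolded this] show ?thesis by simp
  qed
  moreover have "(\<lambda>k. (real k + 1) * (ln (real k + 1) - ln (real k + 1/2)) - 1/2) \<longlonglongrightarrow> 0"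
    by real_asymp
  ultimately have "L2 = 0" using LIMSEQ_unique by fastforce
  with \<open>L2 = L1\<close> L1 L2 show "(\<lambda>k. binet_mu (real k + 1)) \<longlonglongrightarrow> 0"
    and "(\<lambda>k. binet_mu (real k + 1/2)) \<longlonglongrightarrow> 0" by simp_all
qed

lemma binet_mu_half_nat_tendsto_zero:
  fixes n :: nat
  assumes "n \<ge> 1"
  shows "(\<lambda>k. binet_mu (real n / 2 + real k)) \<longlonglongrightarrow> 0"
proof (cases "even n")
  case True
  then obtain m where "n = 2 * m" "m \<ge> 1" using assms by auto
  then have shift: "real n / 2 + real k = real (k + (m - 1)) + 1" for k by (simp add: of_nat_diff)
  show ?thesis unfolding shift
    using LIMSEQ_ignore_initial_segment[OF binet_mu_tendsto_zero(1), of "m - 1"] by simp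
next
  case False
  then obtain m where "n = 2 * m + 1" using oddE by blast
  then have shift: "real n / 2 + real k = real (k + m) + 1/2" for k by simp
  show ?thesis unfolding shift
    using LIMSEQ_ignore_initial_segment[OF binet_mu_tendsto_zero(2), of m] by simp
qed

lemma binet_mu_half_nat_bounds:
  fixes n :: nat
  assumes "n \<ge> 1"
  shows "binet_lower (real n / 2) \<le> binet_mu (real n / 2)"
    and "binet_mu (real n / 2) \<le> binet_upper (real n / 2)"
proof -
  obtain L where "(\<lambda>k. binet_mu (real n / 2 + real k)) \<longlonglongrightarrow> L"
    and "binet_mu (real n / 2) - binet_upper (real n / 2) \<le> L"
    and "L \<le> binet_mu (real n / 2) - binet_lower (real n / 2)"
    using binet_mu_shift_limit[of "real n / 2"] assms by auto
  moreover from this(1) have "L = 0"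
    using binet_mu_half_nat_tendsto_zero[OF assms] LIMSEQ_unique by blast
  ultimately show "binet_lower (real n / 2) \<le> binet_mu (real n / 2)"
    and "binet_mu (real n / 2) \<le> binet_upper (real n / 2)" by simp_all
qed

lemma ln_Omega:
  fixes n :: nat
  shows "ln (Omega n) = real n / 2 * ln pi - (real n / 2 + 1/2) * ln (real n / 2) + real n / 2
    - ln (2 * pi) / 2 - binet_mu (real n / 2)"
proof -
  have "Gamma (real n / 2 + 1) > 0" by (intro Gamma_real_pos) simp
  then have "ln (Omega n) = real n / 2 * ln pi - ln (Gamma (real n / 2 + 1))"
    by (simp add: Omega_def ln_divide_pos ln_powr)
  then show ?thesis by (simp add: binet_mu_def)
qed

lemma ln_Omega_diff_eq:
  fixes n :: nat
  assumes "n \<ge> 1"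
  shows "ln (Omega n) / real n - ln (Omega (n + 1)) / real (n + 1)
    = Psi n + binet_mu ((real n + 1) / 2) / (real n + 1) - binet_mu (real n / 2) / real n"
proof -
  have "ln (Omega (n + 1)) = (real n + 1) / 2 * ln pi - ((real n + 1) / 2 + 1/2) * ln ((real n + 1) / 2)
      + (real n + 1) / 2 - ln (2 * pi) / 2 - binet_mu ((real n + 1) / 2)"
    using ln_Omega[of "n + 1"] by (simp add: add.commute)
  moreover have "real n \<noteq> 0" "real n + 1 \<noteq> 0" using assms by auto
  ultimately show ?thesis
    unfolding ln_Omega[of n] Psi_def by (simp add: divide_simps) algebra
qed

lemma binet_half_gap_lower:
  fixes a :: real
  assumes "a \<ge> 1"
  shows "binet_upper (a / 2) / a - binet_lower ((a + 1) / 2) / (a + 1) < 1 / (3 * a^3)"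
proof -
  have "a \<noteq> 0" "a + 1 \<noteq> 0" using assms by auto
  then have eq: "1 / (3 * a^3) - (binet_upper (a / 2) / a - binet_lower ((a + 1) / 2) / (a + 1))
      = (315*a^8 + 1526*a^7 + 2910*a^6 + 2704*a^5 + 1125*a^4 - 26*a^3 - 226*a^2 - 96*a - 16)
        / (630 * a^6 * (a + 1)^6)"
    unfolding binet_upper_def binet_lower_def by (simp add: divide_simps) algebra
  define v where "v = a - 1"
  have "315*a^8 + 1526*a^7 + 2910*a^6 + 2704*a^5 + 1125*a^4 - 26*a^3 - 226*a^2 - 96*a - 16
      = 8216 + 48056 * v + 118002 * v^2 + 160764 * v^3 + 133755 * v^4 + 69850 * v^5
        + 22412 * v^6 + 4046 * v^7 + 315 * v^8"
    unfolding v_def by algebra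
  also have "\<dots> > 0" using assms by (simp add: v_def add_pos_nonneg)
  finally show ?thesis using eq assms by (smt (verit) divide_pos_pos mult_pos_pos zero_less_power)
qed

lemma binet_half_gap_upper:
  fixes a :: real
  assumes "a \<ge> 1"
  shows "binet_upper ((a + 1) / 2) / (a + 1) - binet_lower (a / 2) / a < 1 / (2 * a^4) - 1 / (3 * a^3)"
proof -
  have "a \<noteq> 0" "a + 1 \<noteq> 0" using assms by auto
  then have eq: "1 / (2 * a^4) - 1 / (3 * a^3) - (binet_upper ((a + 1) / 2) / (a + 1) - binet_lower (a / 2) / a)
      = (364*a^7 + 1783*a^6 + 3500*a^5 + 3360*a^4 + 1596*a^3 + 301*a^2) / (630 * a^6 * (a + 1)^6)"
    unfolding binet_upper_def binet_lower_def by (simp add: divide_simps) algebra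
  have "364*a^7 + 1783*a^6 + 3500*a^5 + 3360*a^4 + 1596*a^3 + 301*a^2 > 0"
    using assms by (simp add: add_pos_pos)
  then show ?thesis using eq assms by (smt (verit) divide_pos_pos mult_pos_pos zero_less_power)
qed

theorem theorem5:
  fixes n :: nat
  assumes "n \<ge> 1"
  shows "Psi n - 1 / (3 * real n ^ 3)
           < ln (Omega n) / real n - ln (Omega (n + 1)) / real (n + 1)
       \<and> ln (Omega n) / real n - ln (Omega (n + 1)) / real (n + 1)
           < Psi n - 1 / (3 * real n ^ 3) + 1 / (2 * real n ^ 4)"
proof -
  define a where "a = real n"
  have a: "a \<ge> 1" using assms by (simp add: a_def)
  have "binet_lower (a / 2) / a \<le> binet_mu (a / 2) / a"
    and "binet_mu (a / 2) / a \<le> binet_upper (a / 2) / a"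
    using binet_mu_half_nat_bounds[OF assms] a by (simp_all add: a_def divide_right_mono)
  moreover have "binet_lower ((a + 1) / 2) / (a + 1) \<le> binet_mu ((a + 1) / 2) / (a + 1)"
    and "binet_mu ((a + 1) / 2) / (a + 1) \<le> binet_upper ((a + 1) / 2) / (a + 1)"
    using binet_mu_half_nat_bounds[of "n + 1"] a by (simp_all add: a_def add.commute divide_right_mono)
  ultimately show ?thesis
    using ln_Omega_diff_eq[OF assms] binet_half_gap_lower[OF a] binet_half_gap_upper[OF a]
    unfolding a_def by linarith
qed

end
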